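(* Let $N\ge 1$ and $n\ge 2$ be integers, let $V=\mathbb{C}^N$ with basis $e_0,\dots,e_{N-1}$, and let $\kappa,h,\nu_0,g_0,\nu_n,g_n$ be complex numbers with $h,g_0,g_n\neq 0$. Define operators on $V^{\otimes n}$ by $$\hat T_0=K^{\mathrm{ra}}_1(\nu_0,g_0),\qquad \hat T_j=\check R^{\mathrm{ra}}_{j,j+1}(\kappa,h)\ (1\le j\le n-1),\qquad \hat T_n=K^{\mathrm{ra}}_n(\nu_n,g_n).$$ Then $T_j\mapsto \hat T_j$ ($0\le j\le n$) extends to an algebra homomorphism $\rho:H_n(1,1,1)\to\mathrm{End}(V^{\otimes n})$; i.e. the $\hat T_j$ satisfy all defining relations of $H_n(1,1,1)$.
   Context: Type $C$ affine Hecke algebra $H_n(t,t_n,t_0)$: the algebra generated by $T_0,\dots,T_n$ with relations $(T_0-t_0)(T_0+t_0^{-1})=0$; $(T_j-t)(T_j+t^{-1})=0$ for $1\le j\le n-1$; $(T_n-t_n)(T_n+t_n^{-1})=0$; $T_0T_1T_0T_1=T_1T_0T_1T_0$; $T_jT_{j+1}T_j=T_{j+1}T_jT_{j+1}$ for $1\le j\le n-2$; $T_{n-1}T_nT_{n-1}T_n=T_nT_{n-1}T_nT_{n-1}$; $T_jT_k=T_kT_j$ for $|j-k|\ge2$. For $H_n(1,1,1)$ all quadratic relations read $T_j^2=1$. Matrix elements: for $A\in\mathrm{End}(V)$, $Ae_j=\sum_k e_k[A]_j^k$; for $R\in\mathrm{End}(V\otimes V)$, $R(e_i\otimes e_j)=\sum_{k,l}[R]_{ij}^{kl}e_k\otimes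 e_l$. $P$ is the flip $P(x\otimes y)=y\otimes x$, and $\check R=RP$. For $A\in\mathrm{End}(V)$, $A_j\in\mathrm{End}(V^{\otimes n})$ acts as $A$ on the $j$-th factor and as identity elsewhere; similarly $\check R_{j,j+1}$ acts as $\check R$ on factors $j,j+1$. Binomial convention: $\binom{a}{b}=0$ unless $0\le b\le a$; $0^0=1$. Define $\epsilon(i,m,k)=1$ if $i\le k<m$, $-1$ if $m\le k<i$, $0$ otherwise. Jordanian $R$-matrix ($i,j,k,l\in\{0,\dots,N-1\}$, sum over integers $m$): $$[R^{\mathrm{ra}}(\kappa,h)]_{ij}^{kl}=(-1)^{j-l}h^{i+j-k-l}\Big\{\binom{i}{k}\binom{j}{l}-\frac{\kappa}{h}\sum_m(-1)^{m-k}\binom{i}{m}\binom{j+m-k-1}{l}\epsilon(j,m,k)\Big\}.$$ $K$-matrix ($j,k\in\{0,\dots,N-1\}$): $$[K^{\mathrm{ra}}(\nu,g)]_j^k=(-1)^j\binom{j}{k}g^{j-k}+2\nu\sum_{0\le l<j}(-1)^{j-l}\binom{j-l-1}{k-l}g^{j-k-1}.$$ *)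

theory Defs
  imports Complex_Main
begin

definition ibinom :: "int \<Rightarrow> int \<Rightarrow> int" where
  "ibinom a b = (if 0 \<le> b \<and> b \<le> a then int (nat a choose nat b) else 0)"

definition eps :: "int \<Rightarrow> int \<Rightarrow> int \<Rightarrow> int" where
  "eps i m k = (if i \<le> k \<and> k < m then 1 else if m \<le> k \<and> k < i then -1 else 0)"

text \<open>Matrix entry [R^ra(kappa,h)]_{ij}^{kl}. The sum over all integers m is written
  over the range 0..i, outside of which binom(i,m) vanishes.\<close>
definition Rra :: "complex \<Rightarrow> complex \<Rightarrow> nat \<Rightarrow> nat \<Rightarrow> nat \<Rightarrow> nat \<Rightarrow> complex" where
  "Rra \<kappa> h i j k l =
     (-1) powi (int j - int l) * h powi (int i + int j - int k - int l) *
     (of_int (ibinom (int i) (int k) * ibinom (int j) (int l))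
      - \<kappa> / h * (\<Sum>m\<in>{0..int i}. (-1) powi (m - int k) *
           of_int (ibinom (int i) m * ibinom (int j + m - int k - 1) (int l)
                   * eps (int j) m (int k))))"

text \<open>[Rcheck]_{ij}^{kl} = [R]_{ji}^{kl}, since Rcheck = R P.\<close>
definition Rcra :: "complex \<Rightarrow> complex \<Rightarrow> nat \<Rightarrow> nat \<Rightarrow> nat \<Rightarrow> nat \<Rightarrow> complex" where
  "Rcra \<kappa> h i j k l = Rra \<kappa> h j i k l"

definition Kra :: "complex \<Rightarrow> complex \<Rightarrow> nat \<Rightarrow> nat \<Rightarrow> complex" where
  "Kra \<nu> g j k =
     (-1) ^ j * of_int (ibinom (int j) (int k)) * g powi (int j - int k)
     + 2 * \<nu> * (\<Sum>l\<in>{0..<j}. (-1) ^ (j - l) *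
           of_int (ibinom (int j - int l - 1) (int k - int l)) * g powi (int j - int k - 1))"

text \<open>Basis of V^{\<otimes>n}: multi-indices (lists of length n with entries < N);
  list position p (0-based) is tensor factor p+1. An operator is given by its
  matrix M out in, i.e. M r c is the coefficient of e_r in the image of e_c.\<close>
definition mindex :: "nat \<Rightarrow> nat \<Rightarrow> nat list set" where
  "mindex N n = {xs. length xs = n \<and> (\<forall>x\<in>set xs. x < N)}"

type_synonym op = "nat list \<Rightarrow> nat list \<Rightarrow> complex"

definition opmul :: "nat \<Rightarrow> nat \<Rightarrow> op \<Rightarrow> op \<Rightarrow> op" where
  "opmul N n A B = (\<lambda>r c. \<Sum>y\<in>mindex N n. A r y * B y c)"

definition opid :: op where
  "opid = (\<lambda>r c. if r = c then 1 else 0)"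

definition opeq :: "nat \<Rightarrow> nat \<Rightarrow> op \<Rightarrow> op \<Rightarrow> bool" where
  "opeq N n A B = (\<forall>r\<in>mindex N n. \<forall>c\<in>mindex N n. A r c = B r c)"

text \<open>A acting on list position p (factor p+1): entry [A]_{c_p}^{r_p} if r, c agree elsewhere.\<close>
definition site1 :: "nat \<Rightarrow> (nat \<Rightarrow> nat \<Rightarrow> complex) \<Rightarrow> nat \<Rightarrow> op" where
  "site1 n A p = (\<lambda>r c. if \<forall>q<n. q \<noteq> p \<longrightarrow> r ! q = c ! q then A (c ! p) (r ! p) else 0)"

definition site2 :: "nat \<Rightarrow> (nat \<Rightarrow> nat \<Rightarrow> nat \<Rightarrow> nat \<Rightarrow> complex) \<Rightarrow> nat \<Rightarrow> op" where
  "site2 n Rc p = (\<lambda>r c. if \<forall>q<n. q \<noteq> p \<and> q \<noteq> p + 1 \<longrightarrow> r ! q = c ! q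
                        then Rc (c ! p) (c ! (p+1)) (r ! p) (r ! (p+1)) else 0)"

definition hatT :: "nat \<Rightarrow> complex \<Rightarrow> complex \<Rightarrow> complex \<Rightarrow> complex \<Rightarrow> complex \<Rightarrow> complex
                     \<Rightarrow> nat \<Rightarrow> op" where
  "hatT n \<kappa> h \<nu>0 g0 \<nu>n gn j =
     (if j = 0 then site1 n (Kra \<nu>0 g0) 0
      else if j = n then site1 n (Kra \<nu>n gn) (n - 1)
      else site2 n (Rcra \<kappa> h) (j - 1))"

end

theory Submission
  imports Defs "HOL-Analysis.Continuum_Not_Denumerable" "HOL-Computational_Algebra.Polynomial"
begin

text \<open>
  Identify \<open>V\<^sup>\<otimes>\<^sup>n\<close> with polynomials in \<open>z\<^sub>0, \<dots>, z\<^sub>n\<^sub>-\<^sub>1\<close> of degree \<open>< N\<close> in each variable,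
  \<open>e\<^sub>r \<mapsto> z\<^sup>r\<close>. By the binomial theorem and a geometric sum, \<open>K\<^sup>r\<^sup>a\<close> on factor \<open>p\<close> becomes
  \<open>G \<mapsto> G \<circ> s - 2\<nu> (G - G \<circ> s) / (2 z\<^sub>p + g)\<close> with \<open>s : z\<^sub>p \<mapsto> -z\<^sub>p - g\<close>, and \<open>R\<^sup>r\<^sup>a P\<close> on
  factors \<open>p, p+1\<close> becomes \<open>G \<mapsto> G \<circ> \<sigma> - \<kappa> (G - G \<circ> \<sigma>) / (z\<^sub>p - z\<^sub>p\<^sub>+\<^sub>1 + h)\<close> with
  \<open>\<sigma> : (z\<^sub>p, z\<^sub>p\<^sub>+\<^sub>1) \<mapsto> (z\<^sub>p\<^sub>+\<^sub>1 - h, z\<^sub>p + h)\<close>. The affine reflections \<open>s, \<sigma>\<close> act on the denominators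
  as reflections act on roots (adjacent pairs like the simple roots of \<open>A\<^sub>2\<close> or \<open>C\<^sub>2\<close>), so these
  rational Demazure--Lusztig operators satisfy the Hecke relations at \<open>t = t\<^sub>0 = t\<^sub>n = 1\<close> as
  identities of rational functions.
  They hold at every point off the countably many hyperplanes \<open>z\<^sub>p \<plusminus> z\<^sub>q \<in> \<int>h + \<int>g\<^sub>0 + \<int>g\<^sub>n\<close>, a set
  stable under the reflections, and a polynomial vanishing there is zero.
\<close>

section \<open>Rational Demazure--Lusztig operators\<close>

definition dl_operator :: "('a \<Rightarrow> 'a) \<Rightarrow> ('a \<Rightarrow> 'b::field) \<Rightarrow> 'b \<Rightarrow> ('a \<Rightarrow> 'b) \<Rightarrow> 'a \<Rightarrow> 'b" where
  "dl_operator \<tau> D c G z = G (\<tau> z) - c * (G z - G (\<tau> z)) / D z"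

lemma dl_operator_sum:
  assumes "finite S"
  shows "dl_operator \<tau> D c (\<lambda>w. \<Sum>y\<in>S. f y * G y w) z = (\<Sum>y\<in>S. f y * dl_operator \<tau> D c (G y) z)"
  using assms unfolding dl_operator_def
  by (simp add: sum_subtractf[symmetric] sum_distrib_left sum_divide_distrib algebra_simps)

lemma dl_operator_cong:
  "G z = G' z \<Longrightarrow> G (\<tau> z) = G' (\<tau> z) \<Longrightarrow> dl_operator \<tau> D c G z = dl_operator \<tau> D c G' z"
  unfolding dl_operator_def by simp

lemma dl_operator_uminus: "dl_operator \<tau> (\<lambda>z. - D z) (- c) = dl_operator \<tau> D c"
  unfolding dl_operator_def by (simp add: fun_eq_iff)

lemma dl_operator_involutive:
  assumes "\<tau> (\<tau> z) = z" "D (\<tau> z) = - D z" "D z \<noteq> 0"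
  shows "dl_operator \<tau> D c (dl_operator \<tau> D c G) z = G z"
  using assms unfolding dl_operator_def by (simp add: field_simps)

lemma dl_operator_commute:
  assumes "\<And>z. \<tau>1 (\<tau>2 z) = \<tau>2 (\<tau>1 z)" "\<And>z. D1 (\<tau>2 z) = D1 z" "\<And>z. D2 (\<tau>1 z) = D2 z"
  shows "dl_operator \<tau>1 D1 c1 (dl_operator \<tau>2 D2 c2 G) z = dl_operator \<tau>2 D2 c2 (dl_operator \<tau>1 D1 c1 G) z"
  unfolding dl_operator_def assms by (simp add: divide_inverse algebra_simps)

lemma dl_operator_braid:
  assumes inv: "\<And>z. \<tau>1 (\<tau>1 z) = z" "\<And>z. \<tau>2 (\<tau>2 z) = z"
    and braid: "\<And>z. \<tau>1 (\<tau>2 (\<tau>1 z)) = \<tau>2 (\<tau>1 (\<tau>2 z))"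
    and D1: "\<And>z. D1 (\<tau>1 z) = - D1 z" "\<And>z. D1 (\<tau>2 z) = D1 z + D2 z"
    and D2: "\<And>z. D2 (\<tau>2 z) = - D2 z" "\<And>z. D2 (\<tau>1 z) = D1 z + D2 z"
    and nz: "D1 z \<noteq> 0" "D2 z \<noteq> 0" "D1 z + D2 z \<noteq> 0"
  shows "dl_operator \<tau>1 D1 c (dl_operator \<tau>2 D2 c (dl_operator \<tau>1 D1 c G)) z
       = dl_operator \<tau>2 D2 c (dl_operator \<tau>1 D1 c (dl_operator \<tau>2 D2 c G)) z"
proof -
  have "D1 (\<tau>2 (\<tau>1 z)) = D2 z" "D2 (\<tau>1 (\<tau>2 z)) = D1 z"
    using D1 D2 by simp_all
  with nz show ?thesis unfolding dl_operator_def
    by (simp add: inv braid D1 D2 divide_simps) (simp add: algebra_simps)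
qed

text \<open>\<open>D1\<close> and \<open>D2\<close> behave like the long and the short simple root of a root system of type
  \<open>C\<^sub>2\<close>.\<close>

lemma dl_operator_braid4:
  assumes inv: "\<And>z. \<tau>1 (\<tau>1 z) = z" "\<And>z. \<tau>2 (\<tau>2 z) = z"
    and braid: "\<And>z. \<tau>1 (\<tau>2 (\<tau>1 (\<tau>2 z))) = \<tau>2 (\<tau>1 (\<tau>2 (\<tau>1 z)))"
    and D1: "\<And>z. D1 (\<tau>1 z) = - D1 z" "\<And>z. D1 (\<tau>2 z) = D1 z - 2 * D2 z"
    and D2: "\<And>z. D2 (\<tau>2 z) = - D2 z" "\<And>z. D2 (\<tau>1 z) = D2 z - D1 z"
    and nz: "D1 z \<noteq> 0" "D2 z \<noteq> 0" "D1 z - 2 * D2 z \<noteq> 0" "D2 z - D1 z \<noteq> 0"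
  shows "dl_operator \<tau>1 D1 c1 (dl_operator \<tau>2 D2 c2 (dl_operator \<tau>1 D1 c1 (dl_operator \<tau>2 D2 c2 G))) z
       = dl_operator \<tau>2 D2 c2 (dl_operator \<tau>1 D1 c1 (dl_operator \<tau>2 D2 c2 (dl_operator \<tau>1 D1 c1 G))) z"
proof -
  define a b where "a = D1 z" and "b = D2 z"
  have orbit: "D1 z = a" "D2 z = b" "D1 (\<tau>2 z) = a - 2 * b" "D2 (\<tau>1 z) = b - a"
    "D1 (\<tau>2 (\<tau>1 z)) = a - 2 * b" "D2 (\<tau>1 (\<tau>2 z)) = b - a"
    "D1 (\<tau>2 (\<tau>1 (\<tau>2 z))) = a" "D2 (\<tau>1 (\<tau>2 (\<tau>1 z))) = b"
    unfolding a_def b_def by (simp_all add: D1 D2 algebra_simps)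
  have "a \<noteq> 0" "b \<noteq> 0" "a - 2 * b \<noteq> 0" "b - a \<noteq> 0"
    using nz unfolding a_def b_def by auto
  then show ?thesis unfolding dl_operator_def
    by (simp only: inv braid D1(1) D2(1) orbit) (simp add: divide_simps, algebra)
qed

section \<open>Generating functions of the matrix entries\<close>

lemma ibinom_times_powi:
  fixes x :: "'a::field"
  assumes "0 \<le> a"
  shows "of_int (ibinom a b) * x powi (a - b)
       = (if 0 \<le> b then of_nat (nat a choose nat b) * x ^ (nat a - nat b) else 0)"
proof (cases "0 \<le> b \<and> b \<le> a")
  case True
  then obtain p q where "a = int p" "b = int q" "q \<le> p"
    by (metis nat_0_le nat_mono order.trans)
  then show ?thesis by (simp add: ibinom_def flip: of_nat_diff)
qed (use assms in \<open>auto simp: ibinom_def binomial_eq_0\<close>)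

lemma sum_binomial_lessThan:
  fixes x a :: "'a::comm_semiring_1"
  assumes "m < N"
  shows "(\<Sum>k<N. of_nat (m choose k) * x ^ k * a ^ (m - k)) = (x + a) ^ m"
proof -
  have "(\<Sum>k<N. of_nat (m choose k) * x ^ k * a ^ (m - k)) = (\<Sum>k\<le>m. of_nat (m choose k) * x ^ k * a ^ (m - k))"
    using assms by (intro sum.mono_neutral_right) (auto simp: binomial_eq_0)
  then show ?thesis by (simp add: binomial_ring)
qed

lemma sum_binomial_shifted:
  fixes x a :: "'a::comm_semiring_1"
  assumes "l + m < N"
  shows "(\<Sum>k<N. if l \<le> k then of_nat (m choose (k - l)) * x ^ k * a ^ (m - (k - l)) else 0)
       = x ^ l * (x + a) ^ m"
proof -
  have "(\<Sum>k<N. if l \<le> k then of_nat (m choose (k - l)) * x ^ k * a ^ (m - (k - l)) else 0)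
      = (\<Sum>k\<in>{l..<N}. of_nat (m choose (k - l)) * x ^ k * a ^ (m - (k - l)))"
  proof -
    have "{..<N} \<inter> {k. l \<le> k} = {l..<N}" by auto
    then show ?thesis by (simp add: sum.If_cases)
  qed
  also have "\<dots> = (\<Sum>t<N - l. of_nat (m choose t) * x ^ (t + l) * a ^ (m - t))"
    using sum.shift_bounds_nat_ivl[of "\<lambda>k. of_nat (m choose (k - l)) * x ^ k * a ^ (m - (k - l))" 0 l "N - l"]
      assms by (simp add: atLeast0LessThan)
  also have "\<dots> = x ^ l * (\<Sum>t<N - l. of_nat (m choose t) * x ^ t * a ^ (m - t))"
    by (simp add: power_add sum_distrib_left algebra_simps)
  also have "\<dots> = x ^ l * (x + a) ^ m"
    using assms by (simp add: sum_binomial_lessThan)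
  finally show ?thesis .
qed

lemma Kra_eq_nat_binomials:
  "Kra \<nu> g j k = (-1) ^ j * (of_nat (j choose k) * g ^ (j - k))
     + 2 * \<nu> * (\<Sum>l<j. (-1) ^ (j - l) *
         (if l \<le> k then of_nat ((j - l - 1) choose (k - l)) * g ^ (j - l - 1 - (k - l)) else 0))"
proof -
  have "of_int (ibinom (int j - int l - 1) (int k - int l)) * g powi (int j - int k - 1)
      = (if l \<le> k then of_nat ((j - l - 1) choose (k - l)) * g ^ (j - l - 1 - (k - l)) else 0)"
    if "l < j" for l
  proof -
    have "int j - int k - 1 = (int j - int l - 1) - (int k - int l)" by simp
    then have "of_int (ibinom (int j - int l - 1) (int k - int l)) * g powi (int j - int k - 1)
        = (if 0 \<le> int k - int l then of_nat (nat (int j - int l - 1) choose nat (int k - int l))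
             * g ^ (nat (int j - int l - 1) - nat (int k - int l)) else 0)"
      using that by (simp only: ibinom_times_powi)
    also have "\<dots> = (if l \<le> k then of_nat ((j - l - 1) choose (k - l)) * g ^ (j - l - 1 - (k - l)) else 0)"
      using that by (simp add: nat_diff_distrib)
    finally show ?thesis .
  qed
  then have "(\<Sum>l\<in>{0..<j}. (-1) ^ (j - l) * of_int (ibinom (int j - int l - 1) (int k - int l)) * g powi (int j - int k - 1))
      = (\<Sum>l<j. (-1) ^ (j - l) *
         (if l \<le> k then of_nat ((j - l - 1) choose (k - l)) * g ^ (j - l - 1 - (k - l)) else 0))"
    unfolding atLeast0LessThan by (intro sum.cong) (simp_all add: mult.assoc)
  moreover have "of_int (ibinom (int j) (int k)) * g powi (int j - int k) = of_nat (j choose k) * g ^ (j - k)"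
    using ibinom_times_powi[of "int j" "int k" g] by simp
  ultimately show ?thesis unfolding Kra_def by (simp only: mult.assoc)
qed

lemma sum_Kra_nu_column:
  fixes x g :: "'a::comm_ring_1"
  assumes "l < j" "j < N"
  shows "(\<Sum>k<N. (-1) ^ (j - l) *
            (if l \<le> k then of_nat ((j - l - 1) choose (k - l)) * g ^ (j - l - 1 - (k - l)) else 0) * x ^ k)
       = - (x ^ l * (- x - g) ^ (j - Suc l))"
proof -
  have "j - l = Suc (j - Suc l)" using assms(1) by simp
  then have sign: "(-1) ^ (j - l) * (x + g) ^ (j - Suc l) = - ((- x - g) ^ (j - Suc l))"
    by (simp add: power_mult_distrib[symmetric])
  have "(\<Sum>k<N. (-1) ^ (j - l) *
          (if l \<le> k then of_nat ((j - l - 1) choose (k - l)) * g ^ (j - l - 1 - (k - l)) else 0) * x ^ k)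
      = (-1) ^ (j - l) * (\<Sum>k<N. if l \<le> k
          then of_nat ((j - l - 1) choose (k - l)) * x ^ k * g ^ (j - l - 1 - (k - l)) else 0)"
    unfolding sum_distrib_left by (intro sum.cong) auto
  also have "\<dots> = (-1) ^ (j - l) * (x ^ l * (x + g) ^ (j - Suc l))"
    using assms by (simp add: sum_binomial_shifted)
  finally show ?thesis using sign by (simp add: algebra_simps)
qed

lemma Kra_generating:
  fixes x :: complex
  assumes "j < N" and "2 * x + g \<noteq> 0"
  shows "(\<Sum>k<N. Kra \<nu> g j k * x ^ k) = (- x - g) ^ j - 2 * \<nu> * (x ^ j - (- x - g) ^ j) / (2 * x + g)"
proof -
  have "(\<Sum>k<N. (-1) ^ j * (of_nat (j choose k) * g ^ (j - k)) * x ^ k)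
      = (-1) ^ j * (\<Sum>k<N. of_nat (j choose k) * x ^ k * g ^ (j - k))"
    by (simp add: sum_distrib_left algebra_simps)
  also have "\<dots> = (- x - g) ^ j"
    using assms(1) by (simp add: sum_binomial_lessThan power_mult_distrib[symmetric])
  finally have reflection_part: "(\<Sum>k<N. (-1) ^ j * (of_nat (j choose k) * g ^ (j - k)) * x ^ k) = (- x - g) ^ j" .
  have "x ^ j - (- x - g) ^ j = (2 * x + g) * (\<Sum>l<j. x ^ l * (- x - g) ^ (j - Suc l))"
    using power_diff_sumr2[of x j "- x - g"] by (simp add: mult.commute)
  then have geometric: "(\<Sum>l<j. x ^ l * (- x - g) ^ (j - Suc l)) = (x ^ j - (- x - g) ^ j) / (2 * x + g)"
    using assms(2) by (simp add: field_simps)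
  have "(\<Sum>k<N. Kra \<nu> g j k * x ^ k) = (- x - g) ^ j
      + 2 * \<nu> * (\<Sum>l<j. \<Sum>k<N. (-1) ^ (j - l) *
         (if l \<le> k then of_nat ((j - l - 1) choose (k - l)) * g ^ (j - l - 1 - (k - l)) else 0) * x ^ k)"
    unfolding Kra_eq_nat_binomials reflection_part[symmetric]
    by (simp add: distrib_right sum.distrib sum_distrib_left sum_distrib_right sum.swap[of _ "{..<N}"] algebra_simps)
  also have "\<dots> = (- x - g) ^ j - 2 * \<nu> * (x ^ j - (- x - g) ^ j) / (2 * x + g)"
    using assms(1) by (simp add: sum_Kra_nu_column geometric sum_negf)
  finally show ?thesis .
qed

lemma minus_powi:
  fixes x :: "'a::field"
  shows "(- x) powi e = (-1) powi e * x powi e"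
  using power_int_mult_distrib[of "-1" x e] by simp

lemma Rcra_binomial_part:
  fixes h :: complex
  assumes "h \<noteq> 0"
  shows "(-1) powi (int i - int l) * h powi (int j + int i - int k - int l)
        * of_int (ibinom (int j) (int k) * ibinom (int i) (int l))
      = of_nat (j choose k) * h ^ (j - k) * (of_nat (i choose l) * (- h) ^ (i - l))"
proof -
  have "h powi (int j + int i - int k - int l) = h powi (int j - int k) * h powi (int i - int l)"
    using assms power_int_add[of h "int j - int k" "int i - int l"] by (simp add: algebra_simps)
  then have "(-1) powi (int i - int l) * h powi (int j + int i - int k - int l)
      * of_int (ibinom (int j) (int k) * ibinom (int i) (int l))
    = (of_int (ibinom (int j) (int k)) * h powi (int j - int k))
      * (of_int (ibinom (int i) (int l)) * (- h) powi (int i - int l))"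
    by (simp add: minus_powi[of h] algebra_simps)
  then show ?thesis by (simp add: ibinom_times_powi)
qed

lemma Rcra_kappa_summand:
  fixes h :: complex
  assumes "h \<noteq> 0" and eps: "eps (int i) (int m) (int k) \<noteq> 0"
  shows "(-1) powi (int i - int l) * h powi (int j + int i - int k - int l)
        * (\<kappa> / h * ((-1) powi (int m - int k) * of_int (ibinom (int j) (int m)
            * ibinom (int i + int m - int k - 1) (int l) * eps (int i) (int m) (int k))))
      = - (\<kappa> * (of_int (eps (int i) (int m) (int k)) * (of_nat (j choose m) * h ^ (j - m))
            * (of_nat ((i + m - k - 1) choose l) * (- h) ^ (i + m - k - 1 - l))))"
proof -
  define a where "a = i + m - k - 1"
  have a: "int i + int m - int k - 1 = int a"
    using eps unfolding a_def eps_def by (auto split: if_splits)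
  have "(-1::complex) powi (int i - int l) * (-1) powi (int m - int k) = (-1) powi (int i - int l + (int m - int k))"
    by (rule power_int_add[symmetric]) simp
  also have "int i - int l + (int m - int k) = (int a - int l) + 1" using a by simp
  finally have sign: "(-1::complex) powi (int i - int l) * (-1) powi (int m - int k) = - ((-1) powi (int a - int l))"
    by (simp add: power_int_add_1)
  have "int j + int i - int k - int l = (int j - int m) + (int a - int l) + 1"
    using a by simp
  then have "h powi (int j + int i - int k - int l) = h powi ((int j - int m) + (int a - int l) + 1)"
    by (simp only:)
  also have "\<dots> = h powi (int j - int m) * h powi (int a - int l) * h"
    using assms by (simp add: power_int_add power_int_add_1)
  finally have power_h: "h powi (int j + int i - int k - int l) = h powi (int j - int m) * h powi (int a - int l) * h" .
  have "(-1) powi (int i - int l) * h powi (int j + int i - int k - int l)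
      * (\<kappa> / h * ((-1) powi (int m - int k) * of_int (ibinom (int j) (int m)
          * ibinom (int i + int m - int k - 1) (int l) * eps (int i) (int m) (int k))))
    = ((-1) powi (int i - int l) * (-1) powi (int m - int k)) * h powi (int j + int i - int k - int l)
      * (\<kappa> / h * of_int (ibinom (int j) (int m) * ibinom (int a) (int l) * eps (int i) (int m) (int k)))"
    unfolding a by (simp only: mult_ac)
  also have "\<dots> = - (\<kappa> * (of_int (eps (int i) (int m) (int k)) * (of_int (ibinom (int j) (int m)) * h powi (int j - int m))
          * (of_int (ibinom (int a) (int l)) * (- h) powi (int a - int l))))"
    unfolding sign power_h using assms by (simp add: minus_powi[of h] field_simps)
  finally show ?thesis by (simp add: ibinom_times_powi a_def)
qed

text \<open>For \<open>k, l\<close> out of range the truncated subtractions below produce junk binomials, but then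
  the factor \<open>eps\<close> (or the binomial coefficient in front) vanishes.\<close>

lemma Rcra_eq_nat_binomials:
  assumes "h \<noteq> 0"
  shows "Rcra \<kappa> h i j k l = of_nat (j choose k) * h ^ (j - k) * (of_nat (i choose l) * (- h) ^ (i - l))
     + \<kappa> * (\<Sum>m\<le>j. of_int (eps (int i) (int m) (int k)) * (of_nat (j choose m) * h ^ (j - m))
                   * (of_nat ((i + m - k - 1) choose l) * (- h) ^ (i + m - k - 1 - l)))"
proof -
  have kappa_summand: "(-1) powi (int i - int l) * h powi (int j + int i - int k - int l)
        * (\<kappa> / h * ((-1) powi (int m - int k) * of_int (ibinom (int j) (int m)
            * ibinom (int i + int m - int k - 1) (int l) * eps (int i) (int m) (int k))))
      = - (\<kappa> * (of_int (eps (int i) (int m) (int k)) * (of_nat (j choose m) * h ^ (j - m))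
            * (of_nat ((i + m - k - 1) choose l) * (- h) ^ (i + m - k - 1 - l))))" for m
  proof (cases "eps (int i) (int m) (int k) = 0")
    case False
    then show ?thesis by (rule Rcra_kappa_summand[OF assms])
  qed simp
  have "Rcra \<kappa> h i j k l = of_nat (j choose k) * h ^ (j - k) * (of_nat (i choose l) * (- h) ^ (i - l))
     - (\<Sum>m\<le>j. (-1) powi (int i - int l) * h powi (int j + int i - int k - int l)
        * (\<kappa> / h * ((-1) powi (int m - int k) * of_int (ibinom (int j) (int m)
            * ibinom (int i + int m - int k - 1) (int l) * eps (int i) (int m) (int k)))))"
    unfolding Rcra_def Rra_def Rcra_binomial_part[OF assms, symmetric]
      image_int_atLeastAtMost[symmetric, of 0 j, simplified]
    by (simp add: sum.reindex sum_distrib_left atLeast0AtMost right_diff_distrib add.commute)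
  also have "\<dots> = of_nat (j choose k) * h ^ (j - k) * (of_nat (i choose l) * (- h) ^ (i - l))
     + \<kappa> * (\<Sum>m\<le>j. of_int (eps (int i) (int m) (int k)) * (of_nat (j choose m) * h ^ (j - m))
                   * (of_nat ((i + m - k - 1) choose l) * (- h) ^ (i + m - k - 1 - l)))"
    by (subst sum.cong[OF refl kappa_summand]) (simp_all add: sum_negf sum_distrib_left)
  finally show ?thesis .
qed

lemma sum_atLeastLessThan_geometric:
  fixes x y :: "'a::comm_ring_1"
  assumes "i \<le> m"
  shows "(x - y) * (\<Sum>k\<in>{i..<m}. x ^ k * y ^ (i + m - k - 1)) = x ^ m * y ^ i - x ^ i * y ^ m"
proof -
  have "(\<Sum>k\<in>{i..<m}. x ^ k * y ^ (i + m - k - 1)) = (\<Sum>t<m - i. x ^ (t + i) * y ^ (m - Suc t))"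
    using sum.shift_bounds_nat_ivl[of "\<lambda>k. x ^ k * y ^ (i + m - k - 1)" 0 i "m - i"] assms
    by (simp add: atLeast0LessThan)
  also have "\<dots> = x ^ i * y ^ i * (\<Sum>t<m - i. y ^ (m - i - Suc t) * x ^ t)"
    unfolding sum_distrib_left
  proof (intro sum.cong refl)
    fix t assume "t \<in> {..<m - i}"
    then have "m - Suc t = i + (m - i - Suc t)" by simp
    then show "x ^ (t + i) * y ^ (m - Suc t) = x ^ i * y ^ i * (y ^ (m - i - Suc t) * x ^ t)"
      by (simp add: power_add algebra_simps)
  qed
  finally have "(x - y) * (\<Sum>k\<in>{i..<m}. x ^ k * y ^ (i + m - k - 1)) = x ^ i * y ^ i * (x ^ (m - i) - y ^ (m - i))"
    by (simp add: power_diff_sumr2 algebra_simps)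
  also have "\<dots> = x ^ m * y ^ i - x ^ i * y ^ m"
  proof -
    have "x ^ m = x ^ i * x ^ (m - i)" "y ^ m = y ^ i * y ^ (m - i)"
      using assms by (simp_all flip: power_add)
    then show ?thesis by (simp add: algebra_simps)
  qed
  finally show ?thesis .
qed

lemma eps_sum_geometric:
  fixes x y :: "'a::comm_ring_1"
  assumes "i < N" "m < N"
  shows "(x - y) * (\<Sum>k<N. of_int (eps (int i) (int m) (int k)) * x ^ k * y ^ (i + m - k - 1))
       = x ^ m * y ^ i - x ^ i * y ^ m"
proof (cases "i \<le> m")
  case True
  have "(\<Sum>k<N. of_int (eps (int i) (int m) (int k)) * x ^ k * y ^ (i + m - k - 1))
      = (\<Sum>k\<in>{i..<m}. x ^ k * y ^ (i + m - k - 1))"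
    using True assms by (intro sum.mono_neutral_cong_right) (auto simp: eps_def)
  with sum_atLeastLessThan_geometric[OF True, of x y] show ?thesis by simp
next
  case False
  have "(\<Sum>k<N. of_int (eps (int i) (int m) (int k)) * x ^ k * y ^ (i + m - k - 1))
      = - (\<Sum>k\<in>{m..<i}. x ^ k * y ^ (m + i - k - 1))"
    using False assms unfolding sum_negf[symmetric]
    by (intro sum.mono_neutral_cong_right) (auto simp: eps_def add.commute)
  with sum_atLeastLessThan_geometric[of m i x y] False show ?thesis by (simp add: algebra_simps)
qed

lemma sum_eps_binomial:
  fixes x y h :: "'a::comm_ring_1"
  assumes "i < N" "j < N"
  shows "(x - y) * (\<Sum>m\<le>j. of_nat (j choose m) * h ^ (j - m)
          * (\<Sum>k<N. of_int (eps (int i) (int m) (int k)) * x ^ k * y ^ (i + m - k - 1)))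
       = y ^ i * (x + h) ^ j - x ^ i * (y + h) ^ j"
proof -
  have "(x - y) * (\<Sum>m\<le>j. of_nat (j choose m) * h ^ (j - m)
          * (\<Sum>k<N. of_int (eps (int i) (int m) (int k)) * x ^ k * y ^ (i + m - k - 1)))
      = (\<Sum>m\<le>j. of_nat (j choose m) * h ^ (j - m) * (x ^ m * y ^ i - x ^ i * y ^ m))"
    unfolding sum_distrib_left[of "x - y"]
  proof (intro sum.cong refl)
    fix m assume "m \<in> {..j}"
    then have "m < N" using assms(2) by simp
    have "(x - y) * (of_nat (j choose m) * h ^ (j - m)
          * (\<Sum>k<N. of_int (eps (int i) (int m) (int k)) * x ^ k * y ^ (i + m - k - 1)))
        = of_nat (j choose m) * h ^ (j - m)
          * ((x - y) * (\<Sum>k<N. of_int (eps (int i) (int m) (int k)) * x ^ k * y ^ (i + m - k - 1)))"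
      by (simp only: mult_ac)
    also have "\<dots> = of_nat (j choose m) * h ^ (j - m) * (x ^ m * y ^ i - x ^ i * y ^ m)"
      unfolding eps_sum_geometric[OF assms(1) \<open>m < N\<close>] ..
    finally show "(x - y) * (of_nat (j choose m) * h ^ (j - m)
          * (\<Sum>k<N. of_int (eps (int i) (int m) (int k)) * x ^ k * y ^ (i + m - k - 1)))
        = of_nat (j choose m) * h ^ (j - m) * (x ^ m * y ^ i - x ^ i * y ^ m)" .
  qed
  also have "\<dots> = y ^ i * (\<Sum>m\<le>j. of_nat (j choose m) * x ^ m * h ^ (j - m))
      - x ^ i * (\<Sum>m\<le>j. of_nat (j choose m) * y ^ m * h ^ (j - m))"
    by (simp add: sum_distrib_left sum_subtractf[symmetric] algebra_simps)
  also have "\<dots> = y ^ i * (x + h) ^ j - x ^ i * (y + h) ^ j"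
    unfolding binomial_ring ..
  finally show ?thesis .
qed

lemma sum_Rcra_kappa_column:
  fixes y h :: "'a::comm_ring_1"
  assumes "i < N" "m < N"
  shows "(\<Sum>l<N. of_int (eps (int i) (int m) (int k)) * c
            * (of_nat ((i + m - k - 1) choose l) * (- h) ^ (i + m - k - 1 - l)) * y ^ l)
       = c * (of_int (eps (int i) (int m) (int k)) * (y - h) ^ (i + m - k - 1))"
proof (cases "eps (int i) (int m) (int k) = 0")
  case False
  then have "i + m - k - 1 < N" using assms by (auto simp: eps_def split: if_splits)
  moreover have "(\<Sum>l<N. of_nat (a choose l) * y ^ l * (- h) ^ (a - l)) = (y - h) ^ a" if "a < N" for a
    using that sum_binomial_lessThan[of a N y "- h"] by simp
  ultimately have "(\<Sum>l<N. of_nat ((i + m - k - 1) choose l) * y ^ l * (- h) ^ (i + m - k - 1 - l))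
      = (y - h) ^ (i + m - k - 1)"
    by blast
  moreover have "(\<Sum>l<N. of_int (eps (int i) (int m) (int k)) * c
            * (of_nat ((i + m - k - 1) choose l) * (- h) ^ (i + m - k - 1 - l)) * y ^ l)
      = c * of_int (eps (int i) (int m) (int k))
        * (\<Sum>l<N. of_nat ((i + m - k - 1) choose l) * y ^ l * (- h) ^ (i + m - k - 1 - l))"
    by (simp only: sum_distrib_left mult_ac)
  ultimately show ?thesis by (simp only: mult_ac)
qed simp

lemma Rcra_generating:
  fixes x y :: complex
  assumes "h \<noteq> 0" "i < N" "j < N" "x - y + h \<noteq> 0"
  shows "(\<Sum>k<N. \<Sum>l<N. Rcra \<kappa> h i j k l * x ^ k * y ^ l)
       = (y - h) ^ i * (x + h) ^ j - \<kappa> * (x ^ i * y ^ j - (y - h) ^ i * (x + h) ^ j) / (x - y + h)"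
proof -
  define P where "P k l = of_nat (j choose k) * h ^ (j - k) * (of_nat (i choose l) * (- h) ^ (i - l))" for k l
  define Q where "Q m k l = of_int (eps (int i) (int m) (int k)) * (of_nat (j choose m) * h ^ (j - m))
      * (of_nat ((i + m - k - 1) choose l) * (- h) ^ (i + m - k - 1 - l))" for m k l
  have "(\<Sum>k<N. \<Sum>l<N. P k l * x ^ k * y ^ l)
      = (\<Sum>k<N. of_nat (j choose k) * x ^ k * h ^ (j - k)) * (\<Sum>l<N. of_nat (i choose l) * y ^ l * (- h) ^ (i - l))"
    unfolding P_def by (simp add: sum_product algebra_simps)
  then have binomial_part: "(\<Sum>k<N. \<Sum>l<N. P k l * x ^ k * y ^ l) = (y - h) ^ i * (x + h) ^ j"
    using assms(2,3) by (simp add: sum_binomial_lessThan)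
  have "(\<Sum>k<N. \<Sum>l<N. (\<Sum>m\<le>j. Q m k l) * x ^ k * y ^ l)
      = (\<Sum>k<N. \<Sum>m\<le>j. \<Sum>l<N. x ^ k * (Q m k l * y ^ l))"
    by (simp add: sum_distrib_left sum_distrib_right mult_ac sum.swap[of _ "{..<N}" "{..j}"])
  also have "\<dots> = (\<Sum>m\<le>j. \<Sum>k<N. x ^ k * (\<Sum>l<N. Q m k l * y ^ l))"
    by (subst sum.swap) (simp only: sum_distrib_left)
  also have "\<dots> = (\<Sum>m\<le>j. of_nat (j choose m) * h ^ (j - m)
          * (\<Sum>k<N. of_int (eps (int i) (int m) (int k)) * x ^ k * (y - h) ^ (i + m - k - 1)))"
    using assms(2,3) unfolding Q_def
    by (intro sum.cong refl) (simp_all only: atMost_iff sum_Rcra_kappa_column, simp add: sum_distrib_left mult_ac)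
  also have "\<dots> = ((y - h) ^ i * (x + h) ^ j - x ^ i * y ^ j) / (x - y + h)"
    using sum_eps_binomial[OF assms(2,3), of x "y - h" h] assms(4) by (simp add: field_simps)
  finally have kappa_part: "(\<Sum>k<N. \<Sum>l<N. (\<Sum>m\<le>j. Q m k l) * x ^ k * y ^ l)
      = ((y - h) ^ i * (x + h) ^ j - x ^ i * y ^ j) / (x - y + h)" .
  have "Rcra \<kappa> h i j k l = P k l + \<kappa> * (\<Sum>m\<le>j. Q m k l)" for k l
    unfolding P_def Q_def by (rule Rcra_eq_nat_binomials[OF assms(1)])
  then have "(\<Sum>k<N. \<Sum>l<N. Rcra \<kappa> h i j k l * x ^ k * y ^ l)
      = (\<Sum>k<N. \<Sum>l<N. P k l * x ^ k * y ^ l) + \<kappa> * (\<Sum>k<N. \<Sum>l<N. (\<Sum>m\<le>j. Q m k l) * x ^ k * y ^ l)"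
    by (simp add: distrib_right sum.distrib sum_distrib_left algebra_simps)
  also have "\<dots> = (y - h) ^ i * (x + h) ^ j - \<kappa> * (x ^ i * y ^ j - (y - h) ^ i * (x + h) ^ j) / (x - y + h)"
    unfolding binomial_part kappa_part using assms(4) by (simp add: field_simps)
  finally show ?thesis .
qed

section \<open>The polynomial model of the tensor power\<close>

type_synonym pfun = "(nat \<Rightarrow> complex) \<Rightarrow> complex"

definition basis_poly :: "nat \<Rightarrow> nat list \<Rightarrow> pfun" where
  "basis_poly n r z = (\<Prod>q<n. z q ^ (r ! q))"

definition vec_poly :: "nat \<Rightarrow> nat \<Rightarrow> (nat list \<Rightarrow> complex) \<Rightarrow> pfun" where
  "vec_poly N n v z = (\<Sum>r\<in>mindex N n. v r * basis_poly n r z)"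

definition mat_vec :: "nat \<Rightarrow> nat \<Rightarrow> op \<Rightarrow> (nat list \<Rightarrow> complex) \<Rightarrow> nat list \<Rightarrow> complex" where
  "mat_vec N n A v = (\<lambda>r. \<Sum>y\<in>mindex N n. A r y * v y)"

lemma finite_mindex: "finite (mindex N n)"
proof -
  have "mindex N n = {xs. set xs \<subseteq> {..<N} \<and> length xs = n}" unfolding mindex_def by auto
  then show ?thesis by (simp add: finite_lists_length_eq)
qed

lemma mindex_update: "y \<in> mindex N n \<Longrightarrow> a < N \<Longrightarrow> y[p := a] \<in> mindex N n"
  unfolding mindex_def by (auto dest: set_update_subset_insert[THEN subsetD])

lemma site1_sum:
  assumes "p < n" "y \<in> mindex N n"
  shows "(\<Sum>r\<in>mindex N n. site1 n A p r y * W r) = (\<Sum>a<N. A (y ! p) a * W (y[p := a]))"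
proof -
  have len: "length y = n" using assms(2) unfolding mindex_def by simp
  have image: "{r\<in>mindex N n. \<forall>q<n. q \<noteq> p \<longrightarrow> r ! q = y ! q} = (\<lambda>a. y[p := a]) ` {..<N}"
  proof (intro equalityI subsetI)
    fix r assume r: "r \<in> {r\<in>mindex N n. \<forall>q<n. q \<noteq> p \<longrightarrow> r ! q = y ! q}"
    then have "r = y[p := r ! p]"
      using len assms(1) by (intro nth_equalityI) (auto simp: mindex_def nth_list_update)
    moreover have "r ! p < N" using r assms(1) by (auto simp: mindex_def)
    ultimately show "r \<in> (\<lambda>a. y[p := a]) ` {..<N}" by blast
  qed (use assms in \<open>auto intro: mindex_update simp: nth_list_update\<close>)
  have "inj_on (\<lambda>a. y[p := a]) {..<N}"
    by (rule inj_onI) (metis len assms(1) nth_list_update_eq)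
  then have "(\<Sum>r\<in>(\<lambda>a. y[p := a]) ` {..<N}. A (y ! p) (r ! p) * W r) = (\<Sum>a<N. A (y ! p) a * W (y[p := a]))"
    using len assms(1) by (simp add: sum.reindex)
  moreover have "(\<Sum>r\<in>mindex N n. site1 n A p r y * W r)
      = (\<Sum>r\<in>{r\<in>mindex N n. \<forall>q<n. q \<noteq> p \<longrightarrow> r ! q = y ! q}. A (y ! p) (r ! p) * W r)"
    unfolding site1_def sum.inter_filter[OF finite_mindex] by (intro sum.cong) auto
  ultimately show ?thesis unfolding image by simp
qed

lemma site2_sum:
  assumes "Suc p < n" "y \<in> mindex N n"
  shows "(\<Sum>r\<in>mindex N n. site2 n R p r y * W r)
       = (\<Sum>a<N. \<Sum>b<N. R (y ! p) (y ! Suc p) a b * W (y[p := a, Suc p := b]))"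
proof -
  have len: "length y = n" using assms(2) unfolding mindex_def by simp
  let ?upd = "\<lambda>(a, b). y[p := a, Suc p := b]"
  have image: "{r\<in>mindex N n. \<forall>q<n. q \<noteq> p \<and> q \<noteq> p + 1 \<longrightarrow> r ! q = y ! q} = ?upd ` ({..<N} \<times> {..<N})"
  proof (intro equalityI subsetI)
    fix r assume r: "r \<in> {r\<in>mindex N n. \<forall>q<n. q \<noteq> p \<and> q \<noteq> p + 1 \<longrightarrow> r ! q = y ! q}"
    then have "r = y[p := r ! p, Suc p := r ! Suc p]"
      using len assms(1) by (intro nth_equalityI) (auto simp: mindex_def nth_list_update)
    moreover have "r ! p < N" "r ! Suc p < N" using r assms(1) by (auto simp: mindex_def)
    ultimately show "r \<in> ?upd ` ({..<N} \<times> {..<N})" by force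
  qed (use assms in \<open>auto intro!: mindex_update simp: nth_list_update\<close>)
  have "inj_on ?upd ({..<N} \<times> {..<N})"
  proof (rule inj_onI, clarify)
    fix a b a' b' assume "y[p := a, Suc p := b] = y[p := a', Suc p := b']"
    then have "y[p := a, Suc p := b] ! p = y[p := a', Suc p := b'] ! p"
      "y[p := a, Suc p := b] ! Suc p = y[p := a', Suc p := b'] ! Suc p" by simp_all
    then show "a = a' \<and> b = b'" using len assms(1) by (simp add: nth_list_update)
  qed
  then have "(\<Sum>r\<in>?upd ` ({..<N} \<times> {..<N}). R (y ! p) (y ! Suc p) (r ! p) (r ! Suc p) * W r)
      = (\<Sum>(a, b)\<in>{..<N} \<times> {..<N}. R (y ! p) (y ! Suc p) a b * W (y[p := a, Suc p := b]))"
    using len assms(1) by (simp add: sum.reindex nth_list_update case_prod_unfold)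
  moreover have "(\<Sum>r\<in>mindex N n. site2 n R p r y * W r)
      = (\<Sum>r\<in>{r\<in>mindex N n. \<forall>q<n. q \<noteq> p \<and> q \<noteq> p + 1 \<longrightarrow> r ! q = y ! q}.
           R (y ! p) (y ! Suc p) (r ! p) (r ! Suc p) * W r)"
    unfolding site2_def sum.inter_filter[OF finite_mindex] by (intro sum.cong) auto
  ultimately show ?thesis unfolding image by (simp add: sum.cartesian_product)
qed

lemma basis_poly_update1:
  assumes "p < n" "length y = n"
  shows "basis_poly n (y[p := a]) (z(p := t)) = t ^ a * (\<Prod>q\<in>{..<n} - {p}. z q ^ (y ! q))"
proof -
  have "(\<Prod>q\<in>{..<n} - {p}. (z(p := t)) q ^ (y[p := a] ! q)) = (\<Prod>q\<in>{..<n} - {p}. z q ^ (y ! q))"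
    by (rule prod.cong) auto
  then show ?thesis
    unfolding basis_poly_def using assms by (simp add: prod.remove[of _ p])
qed

lemma basis_poly_update2:
  assumes "Suc p < n" "length y = n"
  shows "basis_poly n (y[p := a, Suc p := b]) (z(p := t, Suc p := s))
       = t ^ a * s ^ b * (\<Prod>q\<in>{..<n} - {p, Suc p}. z q ^ (y ! q))"
proof -
  have "(\<Prod>q\<in>{..<n} - {p} - {Suc p}. (z(p := t, Suc p := s)) q ^ (y[p := a, Suc p := b] ! q))
      = (\<Prod>q\<in>{..<n} - {p, Suc p}. z q ^ (y ! q))"
    by (rule prod.cong) auto
  then show ?thesis
    unfolding basis_poly_def using assms
    by (simp add: prod.remove[of _ p] prod.remove[of "{..<n} - {p}" "Suc p"] nth_list_update mult.assoc)
qed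

definition refl_K :: "complex \<Rightarrow> nat \<Rightarrow> (nat \<Rightarrow> complex) \<Rightarrow> nat \<Rightarrow> complex" where
  "refl_K g p z = z(p := - z p - g)"

definition refl_R :: "complex \<Rightarrow> nat \<Rightarrow> (nat \<Rightarrow> complex) \<Rightarrow> nat \<Rightarrow> complex" where
  "refl_R h p z = z(p := z (Suc p) - h, Suc p := z p + h)"

definition K_op :: "complex \<Rightarrow> complex \<Rightarrow> nat \<Rightarrow> pfun \<Rightarrow> pfun" where
  "K_op \<nu> g p = dl_operator (refl_K g p) (\<lambda>z. 2 * z p + g) (2 * \<nu>)"

definition R_op :: "complex \<Rightarrow> complex \<Rightarrow> nat \<Rightarrow> pfun \<Rightarrow> pfun" where
  "R_op \<kappa> h p = dl_operator (refl_R h p) (\<lambda>z. z p - z (Suc p) + h) \<kappa>"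

lemma site1_Kra_basis_poly:
  assumes "p < n" "y \<in> mindex N n" "2 * z p + g \<noteq> 0"
  shows "(\<Sum>r\<in>mindex N n. site1 n (Kra \<nu> g) p r y * basis_poly n r z) = K_op \<nu> g p (basis_poly n y) z"
proof -
  have len: "length y = n" and "y ! p < N" using assms(1,2) unfolding mindex_def by auto
  define rest where "rest = (\<Prod>q\<in>{..<n} - {p}. z q ^ (y ! q))"
  have basis: "basis_poly n y (z(p := t)) = t ^ (y ! p) * rest" for t
    using basis_poly_update1[OF assms(1) len, of "y ! p" z t] unfolding rest_def by simp
  have "(\<Sum>r\<in>mindex N n. site1 n (Kra \<nu> g) p r y * basis_poly n r z)
      = (\<Sum>a<N. Kra \<nu> g (y ! p) a * z p ^ a) * rest"
    using basis_poly_update1[OF assms(1) len, of _ z "z p"]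
    by (simp add: site1_sum[OF assms(1,2)] sum_distrib_right rest_def mult.assoc)
  also have "\<dots> = ((- z p - g) ^ (y ! p) - 2 * \<nu> * (z p ^ (y ! p) - (- z p - g) ^ (y ! p)) / (2 * z p + g)) * rest"
    by (simp only: Kra_generating[OF \<open>y ! p < N\<close> assms(3)])
  also have "\<dots> = K_op \<nu> g p (basis_poly n y) z"
    using basis[of "z p"] basis[of "- z p - g"] assms(3)
    by (simp add: K_op_def dl_operator_def refl_K_def field_simps)
  finally show ?thesis .
qed

lemma site2_Rcra_basis_poly:
  assumes "Suc p < n" "y \<in> mindex N n" "z p - z (Suc p) + h \<noteq> 0" "h \<noteq> 0"
  shows "(\<Sum>r\<in>mindex N n. site2 n (Rcra \<kappa> h) p r y * basis_poly n r z) = R_op \<kappa> h p (basis_poly n y) z"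
proof -
  have len: "length y = n" and "y ! p < N" "y ! Suc p < N" using assms(1,2) unfolding mindex_def by auto
  define rest where "rest = (\<Prod>q\<in>{..<n} - {p, Suc p}. z q ^ (y ! q))"
  have basis: "basis_poly n y (z(p := t, Suc p := s)) = t ^ (y ! p) * s ^ (y ! Suc p) * rest" for t s
    using basis_poly_update2[OF assms(1) len, of "y ! p" "y ! Suc p" z t s] unfolding rest_def by simp
  have "(\<Sum>r\<in>mindex N n. site2 n (Rcra \<kappa> h) p r y * basis_poly n r z)
      = (\<Sum>a<N. \<Sum>b<N. Rcra \<kappa> h (y ! p) (y ! Suc p) a b * z p ^ a * z (Suc p) ^ b) * rest"
    using basis_poly_update2[OF assms(1) len, of _ _ z "z p" "z (Suc p)"]
    by (simp add: site2_sum[OF assms(1,2)] sum_distrib_right rest_def mult.assoc)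
  also have "\<dots> = ((z (Suc p) - h) ^ (y ! p) * (z p + h) ^ (y ! Suc p)
      - \<kappa> * (z p ^ (y ! p) * z (Suc p) ^ (y ! Suc p) - (z (Suc p) - h) ^ (y ! p) * (z p + h) ^ (y ! Suc p))
        / (z p - z (Suc p) + h)) * rest"
    by (simp only: Rcra_generating[OF assms(4) \<open>y ! p < N\<close> \<open>y ! Suc p < N\<close> assms(3)])
  also have "\<dots> = R_op \<kappa> h p (basis_poly n y) z"
    using basis[of "z p" "z (Suc p)"] basis[of "z (Suc p) - h" "z p + h"] assms(3)
    by (simp add: R_op_def dl_operator_def refl_R_def field_simps)
  finally show ?thesis .
qed

lemma vec_poly_mat_vec:
  assumes "\<And>y. y \<in> mindex N n \<Longrightarrow>
    (\<Sum>r\<in>mindex N n. A r y * basis_poly n r z) = dl_operator \<tau> D c (basis_poly n y) z"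
  shows "vec_poly N n (mat_vec N n A v) z = dl_operator \<tau> D c (vec_poly N n v) z"
proof -
  have "vec_poly N n (mat_vec N n A v) z = (\<Sum>y\<in>mindex N n. v y * (\<Sum>r\<in>mindex N n. A r y * basis_poly n r z))"
    unfolding vec_poly_def mat_vec_def sum_distrib_right sum_distrib_left
    by (subst sum.swap) (simp add: mult_ac)
  also have "\<dots> = dl_operator \<tau> D c (vec_poly N n v) z"
    unfolding vec_poly_def dl_operator_sum[OF finite_mindex] by (simp add: assms)
  finally show ?thesis .
qed

lemma vec_poly_column_opid:
  assumes "c \<in> mindex N n"
  shows "vec_poly N n (\<lambda>r. opid r c) = basis_poly n c"
proof
  fix z
  have "vec_poly N n (\<lambda>r. opid r c) z = (\<Sum>r\<in>mindex N n. if r = c then basis_poly n r z else 0)"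
    unfolding vec_poly_def opid_def by (intro sum.cong) auto
  then show "vec_poly N n (\<lambda>r. opid r c) z = basis_poly n c z"
    using assms by (simp add: finite_mindex)
qed

lemma mat_vec_column_opid:
  assumes "c \<in> mindex N n"
  shows "mat_vec N n A (\<lambda>r. opid r c) = (\<lambda>r. A r c)"
proof
  fix r
  have "mat_vec N n A (\<lambda>r. opid r c) r = (\<Sum>y\<in>mindex N n. if y = c then A r y else 0)"
    unfolding mat_vec_def opid_def by (intro sum.cong) auto
  then show "mat_vec N n A (\<lambda>r. opid r c) r = A r c"
    using assms by (simp add: finite_mindex)
qed

lemma column_opmul: "(\<lambda>r. opmul N n A B r c) = mat_vec N n A (\<lambda>r. B r c)"
  unfolding opmul_def mat_vec_def ..

section \<open>Relations among the operators\<close>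

lemma K_op_involutive:
  "2 * z p + g \<noteq> 0 \<Longrightarrow> K_op \<nu> g p (K_op \<nu> g p G) z = G z"
  unfolding K_op_def by (rule dl_operator_involutive) (simp_all add: refl_K_def)

lemma R_op_involutive:
  "z p - z (Suc p) + h \<noteq> 0 \<Longrightarrow> R_op \<kappa> h p (R_op \<kappa> h p G) z = G z"
  unfolding R_op_def by (rule dl_operator_involutive) (simp_all add: refl_R_def)

lemma R_op_braid:
  assumes "z p - z (Suc p) + h \<noteq> 0" "z (Suc p) - z (Suc (Suc p)) + h \<noteq> 0" "z p - z (Suc (Suc p)) + 2 * h \<noteq> 0"
  shows "R_op \<kappa> h p (R_op \<kappa> h (Suc p) (R_op \<kappa> h p G)) z
       = R_op \<kappa> h (Suc p) (R_op \<kappa> h p (R_op \<kappa> h (Suc p) G)) z"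
  unfolding R_op_def
proof (rule dl_operator_braid)
  show "refl_R h p (refl_R h (Suc p) (refl_R h p w)) = refl_R h (Suc p) (refl_R h p (refl_R h (Suc p) w))" for w
    unfolding refl_R_def by (auto simp: fun_eq_iff)
qed (use assms in \<open>simp_all add: refl_R_def algebra_simps\<close>)

lemma K_R_op_braid4:
  assumes "2 * z p + g \<noteq> 0" "z p - z (Suc p) + h \<noteq> 0"
    "2 * z (Suc p) + g - 2 * h \<noteq> 0" "z p + z (Suc p) + g - h \<noteq> 0"
  shows "K_op \<nu> g p (R_op \<kappa> h p (K_op \<nu> g p (R_op \<kappa> h p G))) z
       = R_op \<kappa> h p (K_op \<nu> g p (R_op \<kappa> h p (K_op \<nu> g p G))) z"
  unfolding K_op_def R_op_def
proof (rule dl_operator_braid4)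
  show "refl_K g p (refl_R h p (refl_K g p (refl_R h p w))) = refl_R h p (refl_K g p (refl_R h p (refl_K g p w)))" for w
    unfolding refl_K_def refl_R_def by (auto simp: fun_eq_iff)
qed (use assms in \<open>simp_all add: refl_K_def refl_R_def algebra_simps\<close>)

text \<open>At the right end the root of \<open>R_op\<close> has the opposite orientation relative to the
  boundary root, hence the sign change before invoking \<open>dl_operator_braid4\<close>.\<close>

lemma R_K_op_braid4:
  assumes "2 * z (Suc p) + g \<noteq> 0" "z p - z (Suc p) + h \<noteq> 0"
    "2 * z p + g + 2 * h \<noteq> 0" "z p + z (Suc p) + g + h \<noteq> 0"
  shows "R_op \<kappa> h p (K_op \<nu> g (Suc p) (R_op \<kappa> h p (K_op \<nu> g (Suc p) G))) z
       = K_op \<nu> g (Suc p) (R_op \<kappa> h p (K_op \<nu> g (Suc p) (R_op \<kappa> h p G))) z"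
proof -
  have R: "R_op \<kappa> h p = dl_operator (refl_R h p) (\<lambda>z. - (z p - z (Suc p) + h)) (- \<kappa>)"
    unfolding R_op_def dl_operator_uminus ..
  show ?thesis
    unfolding K_op_def R
  proof (rule dl_operator_braid4[symmetric])
    show "refl_K g (Suc p) (refl_R h p (refl_K g (Suc p) (refl_R h p w)))
        = refl_R h p (refl_K g (Suc p) (refl_R h p (refl_K g (Suc p) w)))" for w
      unfolding refl_K_def refl_R_def by (auto simp: fun_eq_iff)
  qed (use assms in \<open>simp_all add: refl_K_def refl_R_def algebra_simps neg_eq_iff_add_eq_0\<close>)
qed

lemma K_op_commute:
  "p \<noteq> q \<Longrightarrow> K_op \<nu> g p (K_op \<nu>' g' q G) z = K_op \<nu>' g' q (K_op \<nu> g p G) z"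
  unfolding K_op_def by (rule dl_operator_commute) (auto simp: refl_K_def fun_eq_iff)

lemma K_R_op_commute:
  "p \<noteq> q \<Longrightarrow> p \<noteq> Suc q \<Longrightarrow> K_op \<nu> g p (R_op \<kappa> h q G) z = R_op \<kappa> h q (K_op \<nu> g p G) z"
  unfolding K_op_def R_op_def by (rule dl_operator_commute) (auto simp: refl_K_def refl_R_def fun_eq_iff)

lemma R_op_commute:
  "Suc p < q \<Longrightarrow> R_op \<kappa> h p (R_op \<kappa> h q G) z = R_op \<kappa> h q (R_op \<kappa> h p G) z"
  unfolding R_op_def by (rule dl_operator_commute) (auto simp: refl_R_def fun_eq_iff)

section \<open>Generic points\<close>

text \<open>Along the orbits of the reflections every denominator has the form \<open>z\<^sub>p \<plusminus> z\<^sub>q + c\<close> with \<open>c\<close>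
  in the lattice \<open>\<int>h + \<int>g\<^sub>0 + \<int>g\<^sub>n\<close>.\<close>

definition lattice :: "complex \<Rightarrow> complex \<Rightarrow> complex \<Rightarrow> complex set" where
  "lattice h g0 gn = range (\<lambda>(a :: int, b :: int, c :: int). of_int a * h + of_int b * g0 + of_int c * gn)"

definition generic :: "complex set \<Rightarrow> nat \<Rightarrow> (nat \<Rightarrow> complex) \<Rightarrow> bool" where
  "generic L n z \<longleftrightarrow> (\<forall>p<n. \<forall>q<n. (p \<noteq> q \<longrightarrow> z p - z q \<notin> L) \<and> z p + z q \<notin> L)"

lemma countable_lattice: "countable (lattice h g0 gn)"
  unfolding lattice_def by simp

lemma lattice_memI: "of_int a * h + of_int b * g0 + of_int c * gn \<in> lattice h g0 gn"
  unfolding lattice_def by (rule range_eqI[of _ _ "(a, b, c)"]) simp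

lemma lattice_diff:
  assumes "x \<in> lattice h g0 gn" "y \<in> lattice h g0 gn"
  shows "x - y \<in> lattice h g0 gn"
proof -
  obtain a b c a' b' c' where "x = of_int a * h + of_int b * g0 + of_int c * gn"
    "y = of_int a' * h + of_int b' * g0 + of_int c' * gn"
    using assms unfolding lattice_def by auto
  then have "x - y = of_int (a - a') * h + of_int (b - b') * g0 + of_int (c - c') * gn"
    by (simp add: algebra_simps)
  then show ?thesis by (simp only: lattice_memI)
qed

lemma generic_add_neq:
  "generic L n z \<Longrightarrow> p < n \<Longrightarrow> q < n \<Longrightarrow> c \<in> L \<Longrightarrow> z p + z q \<noteq> c"
  unfolding generic_def by blast

lemma generic_diff_neq:
  "generic L n z \<Longrightarrow> p < n \<Longrightarrow> q < n \<Longrightarrow> p \<noteq> q \<Longrightarrow> c \<in> L \<Longrightarrow> z p - z q \<noteq> c"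
  unfolding generic_def by blast

lemma diff_closed_uminus_iff:
  fixes L :: "'a::ab_group_add set"
  assumes "\<And>x y. x \<in> L \<Longrightarrow> y \<in> L \<Longrightarrow> x - y \<in> L"
  shows "- x \<in> L \<longleftrightarrow> x \<in> L"
  using assms[of x x] assms[of 0 x] assms[of "- x" "- x"] assms[of 0 "- x"] by auto

lemma diff_closed_add_iff:
  fixes L :: "'a::ab_group_add set"
  assumes "\<And>x y. x \<in> L \<Longrightarrow> y \<in> L \<Longrightarrow> x - y \<in> L" "c \<in> L"
  shows "x + c \<in> L \<longleftrightarrow> x \<in> L"
  using assms(1)[OF _ assms(2), of "x + c"] assms(1)[of x "- c"] assms(2) diff_closed_uminus_iff[OF assms(1), of c]
  by auto

lemma generic_signed_perm:
  assumes closed: "\<And>x y. x \<in> L \<Longrightarrow> y \<in> L \<Longrightarrow> x - y \<in> L" and gen: "generic L n z"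
    and perm: "\<forall>q<n. \<pi> q < n" "inj_on \<pi> {..<n}"
    and sign: "\<forall>q<n. s q = 1 \<or> s q = -1" and shift: "\<forall>q<n. z' q - s q * z (\<pi> q) \<in> L"
  shows "generic L n z'"
proof -
  note neg = diff_closed_uminus_iff[OF closed] and shifted = diff_closed_add_iff[OF closed]
  have combination: "s p * z (\<pi> p) + t * s q * z (\<pi> q) \<notin> L"
    if "p < n" "q < n" "t = 1 \<or> t = -1" and distinct: "p \<noteq> q \<or> t = 1" for p q t
  proof -
    have "\<pi> p < n" "\<pi> q < n" using perm(1) that(1,2) by auto
    moreover have "\<pi> p \<noteq> \<pi> q" if "p \<noteq> q"
      using perm(2) \<open>p < n\<close> \<open>q < n\<close> that by (auto dest: inj_onD)
    ultimately have plus: "z (\<pi> p) + z (\<pi> q) \<notin> L" and minus: "p \<noteq> q \<Longrightarrow> z (\<pi> p) - z (\<pi> q) \<notin> L"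
      using gen unfolding generic_def by auto
    have "s p = 1 \<or> s p = -1" "t * s q = 1 \<or> t * s q = -1" using sign that by auto
    then consider "s p = 1" "t * s q = 1" | "s p = -1" "t * s q = -1"
      | "s p = 1" "t * s q = -1" "p \<noteq> q" | "s p = -1" "t * s q = 1" "p \<noteq> q"
      using distinct by (cases "p = q") auto
    then show ?thesis
    proof cases
      case 2
      then show ?thesis using plus neg[of "z (\<pi> p) + z (\<pi> q)"] by (simp add: algebra_simps)
    next
      case 4
      then show ?thesis using minus neg[of "z (\<pi> p) - z (\<pi> q)"] by (simp add: algebra_simps)
    qed (use plus minus in simp_all)
  qed
  show ?thesis
    unfolding generic_def
  proof (intro allI impI conjI)
    fix p q assume pq: "p < n" "q < n"
    define c where "c q = z' q - s q * z (\<pi> q)" for q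
    have "c p \<in> L" "c q \<in> L" using shift pq unfolding c_def by auto
    then have "c p - c q \<in> L" "c p - (- c q) \<in> L" using closed neg[of "c q"] by blast+
    then have "c p - c q \<in> L" "c p + c q \<in> L" by simp_all
    moreover have "z' p - z' q = (s p * z (\<pi> p) + (-1) * s q * z (\<pi> q)) + (c p - c q)"
      "z' p + z' q = (s p * z (\<pi> p) + 1 * s q * z (\<pi> q)) + (c p + c q)"
      unfolding c_def by simp_all
    ultimately show "z' p + z' q \<notin> L" "p \<noteq> q \<Longrightarrow> z' p - z' q \<notin> L"
      using combination[OF pq, of 1] combination[OF pq, of "-1"] shifted by auto
  qed
qed

lemma generic_refl_K:
  assumes "\<And>x y. x \<in> L \<Longrightarrow> y \<in> L \<Longrightarrow> x - y \<in> L" "generic L n z" "p < n" "g \<in> L"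
  shows "generic L n (refl_K g p z)"
proof (rule generic_signed_perm[OF assms(1,2), of id "\<lambda>q. if q = p then -1 else 1"])
  have "0 \<in> L" "- g \<in> L" using assms(1)[of g g] assms(1)[of 0 g] assms(4) by auto
  then show "\<forall>q<n. refl_K g p z q - (if q = p then -1 else 1) * z (id q) \<in> L"
    by (simp add: refl_K_def)
qed auto

lemma generic_refl_R:
  assumes "\<And>x y. x \<in> L \<Longrightarrow> y \<in> L \<Longrightarrow> x - y \<in> L" "generic L n z" "Suc p < n" "h \<in> L"
  shows "generic L n (refl_R h p z)"
proof (rule generic_signed_perm[OF assms(1,2), of "\<lambda>q. if q = p then Suc p else if q = Suc p then p else q" "\<lambda>_. 1"])
  have "0 \<in> L" "- h \<in> L" using assms(1)[of h h] assms(1)[of 0 h] assms(4) by auto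
  then show "\<forall>q<n. refl_R h p z q - 1 * z (if q = p then Suc p else if q = Suc p then p else q) \<in> L"
    using assms(4) by (simp add: refl_R_def)
qed (use assms(3) in \<open>auto simp: inj_on_def\<close>)

lemma generic_lattice_neq:
  assumes "generic (lattice h g0 gn) n z" "p < n" "q < n"
  shows "e = z p + z q + (of_int a * h + of_int b * g0 + of_int c * gn) \<Longrightarrow> e \<noteq> 0"
    and "p \<noteq> q \<Longrightarrow> e = z p - z q + (of_int a * h + of_int b * g0 + of_int c * gn) \<Longrightarrow> e \<noteq> 0"
proof -
  have "- (of_int a * h + of_int b * g0 + of_int c * gn) = of_int (- a) * h + of_int (- b) * g0 + of_int (- c) * gn"
    by simp
  then have "- (of_int a * h + of_int b * g0 + of_int c * gn) \<in> lattice h g0 gn"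
    by (simp only: lattice_memI)
  then have "z p + z q \<noteq> - (of_int a * h + of_int b * g0 + of_int c * gn)"
    "p \<noteq> q \<Longrightarrow> z p - z q \<noteq> - (of_int a * h + of_int b * g0 + of_int c * gn)"
    using generic_add_neq[OF assms] generic_diff_neq[OF assms] by blast+
  then show "e = z p + z q + (of_int a * h + of_int b * g0 + of_int c * gn) \<Longrightarrow> e \<noteq> 0"
    "p \<noteq> q \<Longrightarrow> e = z p - z q + (of_int a * h + of_int b * g0 + of_int c * gn) \<Longrightarrow> e \<noteq> 0"
    by (simp_all only: eq_neg_iff_add_eq_0 simp_thms)
qed

section \<open>Vanishing at generic points\<close>

lemma coeff_eq_0_if_infinite_roots:
  fixes c :: "nat \<Rightarrow> complex"
  assumes "infinite S" "\<And>w. w \<in> S \<Longrightarrow> (\<Sum>i<N. c i * w ^ i) = 0" "k < N"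
  shows "c k = 0"
proof -
  define P where "P = (\<Sum>i<N. monom (c i) i)"
  have "poly P w = (\<Sum>i<N. c i * w ^ i)" for w
    unfolding P_def by (simp add: poly_sum poly_monom)
  then have "S \<subseteq> {w. poly P w = 0}" using assms(2) by auto
  with assms(1) have "P = 0" using poly_roots_finite finite_subset by blast
  moreover have "coeff P k = c k" unfolding P_def using assms(3) by (simp add: coeff_sum)
  ultimately show ?thesis by simp
qed

lemma mindex_Suc: "mindex N (Suc n) = (\<lambda>(x, t). x # t) ` ({..<N} \<times> mindex N n)"
  unfolding mindex_def by (auto simp: length_Suc_conv image_iff)

lemma vec_poly_Suc:
  "vec_poly N (Suc n) v z = (\<Sum>x<N. z 0 ^ x * vec_poly N n (\<lambda>t. v (x # t)) (\<lambda>q. z (Suc q)))"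
proof -
  have "inj_on (\<lambda>(x, t). x # t) ({..<N} \<times> mindex N n)" by (rule inj_onI) auto
  then have "vec_poly N (Suc n) v z = (\<Sum>(x, t)\<in>{..<N} \<times> mindex N n. v (x # t) * basis_poly (Suc n) (x # t) z)"
    unfolding vec_poly_def mindex_Suc by (simp add: sum.reindex case_prod_unfold)
  also have "\<dots> = (\<Sum>x<N. \<Sum>t\<in>mindex N n. z 0 ^ x * (v (x # t) * basis_poly n t (\<lambda>q. z (Suc q))))"
    unfolding sum.cartesian_product[symmetric] basis_poly_def prod.lessThan_Suc_shift by (simp add: mult_ac)
  finally show ?thesis unfolding vec_poly_def by (simp add: sum_distrib_left)
qed

lemma generic_Cons:
  assumes "generic L n z" "w + w \<notin> L"
    and "\<forall>q<n. w - z q \<notin> L \<and> z q - w \<notin> L \<and> w + z q \<notin> L"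
  shows "generic L (Suc n) (case_nat w z)"
  using assms unfolding generic_def
  by (auto simp: less_Suc_eq_0_disj add.commute[of "z _" w])

lemma countable_generic_Cons_exceptions:
  fixes z :: "nat \<Rightarrow> complex"
  assumes "countable L"
  shows "countable ({w. w + w \<in> L} \<union> (\<Union>q<n. {w. w - z q \<in> L \<or> z q - w \<in> L \<or> w + z q \<in> L}))"
proof -
  have "{w. w + w \<in> L} \<subseteq> (\<lambda>l. l / 2) ` L"
  proof
    fix w assume "w \<in> {w. w + w \<in> L}"
    then show "w \<in> (\<lambda>l. l / 2) ` L" by (intro image_eqI[of w _ "w + w"]) auto
  qed
  moreover have "{w. w - z q \<in> L \<or> z q - w \<in> L \<or> w + z q \<in> L}
      \<subseteq> (\<lambda>l. l + z q) ` L \<union> (\<lambda>l. z q - l) ` L \<union> (\<lambda>l. l - z q) ` L" for q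
  proof
    fix w assume "w \<in> {w. w - z q \<in> L \<or> z q - w \<in> L \<or> w + z q \<in> L}"
    then show "w \<in> (\<lambda>l. l + z q) ` L \<union> (\<lambda>l. z q - l) ` L \<union> (\<lambda>l. l - z q) ` L"
      by (auto intro: image_eqI[of w _ "w - z q"] image_eqI[of w _ "z q - w"] image_eqI[of w _ "w + z q"])
  qed
  ultimately have "countable {w. w + w \<in> L}"
    "countable {w. w - z q \<in> L \<or> z q - w \<in> L \<or> w + z q \<in> L}" for q
    using assms by (meson countable_Un countable_image countable_subset)+
  then show ?thesis by (intro countable_Un countable_UN) simp_all
qed

lemma vec_poly_vanishes_generic:
  assumes "countable L" and "\<And>z. generic L n z \<Longrightarrow> vec_poly N n v z = 0" and "r \<in> mindex N n"
  shows "v r = 0"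
  using assms(2,3)
proof (induction n arbitrary: v r)
  case 0
  then have "r = []" "mindex N 0 = {[]}" unfolding mindex_def by auto
  moreover have "generic L 0 z" for z unfolding generic_def by simp
  ultimately have "v [] * basis_poly 0 [] z = 0" for z using 0(1) unfolding vec_poly_def by simp
  then show ?case using \<open>r = []\<close> by (simp add: basis_poly_def)
next
  case (Suc n)
  obtain x t where r: "r = x # t" "x < N" "t \<in> mindex N n"
    using Suc.prems(2) unfolding mindex_Suc by (auto simp: image_iff)
  have "vec_poly N n (\<lambda>t. v (x # t)) z = 0" if gen: "generic L n z" for z
  proof -
    define B where "B = {w. w + w \<in> L} \<union> (\<Union>q<n. {w. w - z q \<in> L \<or> z q - w \<in> L \<or> w + z q \<in> L})"
    have "infinite (UNIV - B)"
    proof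
      assume "finite (UNIV - B)"
      then have "countable (B \<union> (UNIV - B))"
        using countable_generic_Cons_exceptions[OF assms(1)] countable_finite unfolding B_def by blast
      then show False using uncountable_UNIV_complex by simp
    qed
    moreover have "(\<Sum>x<N. vec_poly N n (\<lambda>t. v (x # t)) z * w ^ x) = 0" if "w \<in> UNIV - B" for w
    proof -
      have "generic L (Suc n) (case_nat w z)"
        using that by (intro generic_Cons[OF gen]) (auto simp: B_def)
      then have "vec_poly N (Suc n) v (case_nat w z) = 0" by (rule Suc.prems(1))
      then show ?thesis unfolding vec_poly_Suc by (simp add: mult.commute)
    qed
    ultimately show ?thesis by (rule coeff_eq_0_if_infinite_roots) (use r(2) in simp_all)
  qed
  then have "v (x # t) = 0" by (rule Suc.IH[OF _ r(3)])
  then show ?case using r(1) by simp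
qed

lemma vec_poly_diff: "vec_poly N n (\<lambda>r. u r - w r) z = vec_poly N n u z - vec_poly N n w z"
  unfolding vec_poly_def by (simp add: sum_subtractf algebra_simps)

lemma opeq_if_vec_poly_eq:
  assumes "countable L"
    and "\<And>c z. c \<in> mindex N n \<Longrightarrow> generic L n z \<Longrightarrow>
      vec_poly N n (\<lambda>r. X r c) z = vec_poly N n (\<lambda>r. Y r c) z"
  shows "opeq N n X Y"
  unfolding opeq_def
proof (intro ballI)
  fix r c assume "r \<in> mindex N n" "c \<in> mindex N n"
  then have "X r c - Y r c = 0"
    by (intro vec_poly_vanishes_generic[OF assms(1), of n N "\<lambda>r. X r c - Y r c"]) (simp_all add: vec_poly_diff assms(2))
  then show "X r c = Y r c" by simp
qed

section \<open>The Hecke relations\<close>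

context
  fixes N n :: nat and \<kappa> h \<nu>0 g0 \<nu>n gn :: complex
  assumes two_le_n: "2 \<le> n" and h_neq_0: "h \<noteq> 0"
begin

definition T_op :: "nat \<Rightarrow> pfun \<Rightarrow> pfun" where
  "T_op j = (if j = 0 then K_op \<nu>0 g0 0 else if j = n then K_op \<nu>n gn (n - 1) else R_op \<kappa> h (j - 1))"

lemma T_op_0: "T_op 0 = K_op \<nu>0 g0 0"
  unfolding T_op_def by simp

lemma T_op_n: "T_op n = K_op \<nu>n gn (n - 1)"
  unfolding T_op_def using two_le_n by simp

lemma T_op_R: "0 < j \<Longrightarrow> j < n \<Longrightarrow> T_op j = R_op \<kappa> h (j - 1)"
  unfolding T_op_def by simp

lemma lattice_generators: "h \<in> lattice h g0 gn" "g0 \<in> lattice h g0 gn" "gn \<in> lattice h g0 gn"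
  using lattice_memI[of 1 h 0 g0 0 gn] lattice_memI[of 0 h 1 g0 0 gn] lattice_memI[of 0 h 0 g0 1 gn] by simp_all

lemma generic_denominators:
  assumes "generic (lattice h g0 gn) n z"
  shows "p < n \<Longrightarrow> 2 * z p + g0 \<noteq> 0" "p < n \<Longrightarrow> 2 * z p + gn \<noteq> 0"
    "Suc p < n \<Longrightarrow> z p - z (Suc p) + h \<noteq> 0"
  by (intro generic_lattice_neq[OF assms, where q = p and a = 0 and b = 1 and c = 0]
      generic_lattice_neq[OF assms, where q = p and a = 0 and b = 0 and c = 1]
      generic_lattice_neq[OF assms, where q = "Suc p" and a = 1 and b = 0 and c = 0]; simp)+

lemma vec_poly_mat_vec_hatT:
  assumes "j \<le> n" "generic (lattice h g0 gn) n z"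
  shows "vec_poly N n (mat_vec N n (hatT n \<kappa> h \<nu>0 g0 \<nu>n gn j) v) z = T_op j (vec_poly N n v) z"
proof -
  consider "j = 0" | "j = n" | "0 < j" "j < n" using assms(1) by linarith
  then show ?thesis
  proof cases
    case 1
    have "2 * z 0 + g0 \<noteq> 0" using two_le_n generic_denominators(1)[OF assms(2)] by simp
    moreover have "hatT n \<kappa> h \<nu>0 g0 \<nu>n gn j = site1 n (Kra \<nu>0 g0) 0"
      "T_op j = dl_operator (refl_K g0 0) (\<lambda>z. 2 * z 0 + g0) (2 * \<nu>0)"
      using 1 by (simp_all add: hatT_def T_op_def K_op_def)
    ultimately show ?thesis
      using two_le_n by (simp add: vec_poly_mat_vec site1_Kra_basis_poly[unfolded K_op_def])
  next
    case 2
    have "2 * z (n - 1) + gn \<noteq> 0" using two_le_n generic_denominators(2)[OF assms(2)] by simp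
    moreover have "hatT n \<kappa> h \<nu>0 g0 \<nu>n gn j = site1 n (Kra \<nu>n gn) (n - 1)"
      "T_op j = dl_operator (refl_K gn (n - 1)) (\<lambda>z. 2 * z (n - 1) + gn) (2 * \<nu>n)"
      using 2 two_le_n by (simp_all add: hatT_def T_op_def K_op_def)
    ultimately show ?thesis
      using two_le_n by (simp add: vec_poly_mat_vec site1_Kra_basis_poly[unfolded K_op_def])
  next
    case 3
    have "z (j - 1) - z (Suc (j - 1)) + h \<noteq> 0" using 3 by (intro generic_denominators(3)[OF assms(2)]) simp
    moreover have "hatT n \<kappa> h \<nu>0 g0 \<nu>n gn j = site2 n (Rcra \<kappa> h) (j - 1)"
      "T_op j = dl_operator (refl_R h (j - 1)) (\<lambda>z. z (j - 1) - z (Suc (j - 1)) + h) \<kappa>"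
      using 3 by (simp_all add: hatT_def T_op_def R_op_def)
    ultimately show ?thesis
      using 3 h_neq_0 by (simp add: vec_poly_mat_vec site2_Rcra_basis_poly[unfolded R_op_def])
  qed
qed

lemma T_op_cong:
  assumes "j \<le> n" "generic (lattice h g0 gn) n z"
    and "\<And>w. generic (lattice h g0 gn) n w \<Longrightarrow> G w = G' w"
  shows "T_op j G z = T_op j G' z"
proof -
  have "0 < n" using two_le_n by simp
  consider "j = 0" | "j = n" | "0 < j" "j < n" using assms(1) by linarith
  then show ?thesis
  proof cases
    case 1
    have "generic (lattice h g0 gn) n (refl_K g0 0 z)"
      by (rule generic_refl_K[OF _ assms(2) \<open>0 < n\<close> lattice_generators(2)]) (rule lattice_diff)
    then show ?thesis
      unfolding 1 T_op_0 K_op_def by (intro dl_operator_cong) (simp_all add: assms)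
  next
    case 2
    have "n - 1 < n" using \<open>0 < n\<close> by simp
    have "generic (lattice h g0 gn) n (refl_K gn (n - 1) z)"
      by (rule generic_refl_K[OF _ assms(2) \<open>n - 1 < n\<close> lattice_generators(3)]) (rule lattice_diff)
    then show ?thesis
      unfolding 2 T_op_n K_op_def by (intro dl_operator_cong) (simp_all add: assms)
  next
    case 3
    have "Suc (j - 1) < n" using 3 by simp
    have "generic (lattice h g0 gn) n (refl_R h (j - 1) z)"
      by (rule generic_refl_R[OF _ assms(2) \<open>Suc (j - 1) < n\<close> lattice_generators(1)]) (rule lattice_diff)
    then show ?thesis
      unfolding T_op_R[OF 3] R_op_def by (intro dl_operator_cong) (simp_all add: assms)
  qed
qed

lemma T_op_involutive:
  assumes "j \<le> n" "generic (lattice h g0 gn) n z"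
  shows "T_op j (T_op j G) z = G z"
proof -
  consider "j = 0" | "j = n" | "0 < j" "j < n" using assms(1) by linarith
  then show ?thesis
  proof cases
    case 1
    have "2 * z 0 + g0 \<noteq> 0" using two_le_n generic_denominators(1)[OF assms(2)] by simp
    then show ?thesis unfolding 1 T_op_0 by (rule K_op_involutive)
  next
    case 2
    have "2 * z (n - 1) + gn \<noteq> 0" using two_le_n generic_denominators(2)[OF assms(2)] by simp
    then show ?thesis unfolding 2 T_op_n by (rule K_op_involutive)
  next
    case 3
    have "z (j - 1) - z (Suc (j - 1)) + h \<noteq> 0" using 3 by (intro generic_denominators(3)[OF assms(2)]) simp
    then show ?thesis unfolding T_op_R[OF 3] by (rule R_op_involutive)
  qed
qed

lemma T_op_reflection_left:
  assumes "generic (lattice h g0 gn) n z"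
  shows "T_op 0 (T_op 1 (T_op 0 (T_op 1 G))) z = T_op 1 (T_op 0 (T_op 1 (T_op 0 G))) z"
proof -
  have "T_op 1 = R_op \<kappa> h 0" using two_le_n by (simp add: T_op_R)
  moreover have "2 * z 0 + g0 \<noteq> 0" "z 0 - z 1 + h \<noteq> 0" "2 * z 1 + g0 - 2 * h \<noteq> 0" "z 0 + z 1 + g0 - h \<noteq> 0"
    using two_le_n by (intro generic_lattice_neq[OF assms, where p = 0 and q = 0 and a = 0 and b = 1 and c = 0]
        generic_lattice_neq[OF assms, where p = 0 and q = 1 and a = 1 and b = 0 and c = 0]
        generic_lattice_neq[OF assms, where p = 1 and q = 1 and a = "-2" and b = 1 and c = 0]
        generic_lattice_neq[OF assms, where p = 0 and q = 1 and a = "-1" and b = 1 and c = 0]; simp)+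
  ultimately show ?thesis unfolding T_op_0 using K_R_op_braid4[where p = 0] by simp
qed

lemma T_op_braid:
  assumes "0 < j" "j + 1 < n" "generic (lattice h g0 gn) n z"
  shows "T_op j (T_op (j + 1) (T_op j G)) z = T_op (j + 1) (T_op j (T_op (j + 1) G)) z"
proof -
  define p where "p = j - 1"
  have "T_op j = R_op \<kappa> h p" "T_op (j + 1) = R_op \<kappa> h (Suc p)"
    using assms(1,2) by (simp_all add: T_op_R p_def)
  moreover have "z p - z (Suc p) + h \<noteq> 0" "z (Suc p) - z (Suc (Suc p)) + h \<noteq> 0"
    "z p - z (Suc (Suc p)) + 2 * h \<noteq> 0"
    using assms(1,2) unfolding p_def
    by (intro generic_lattice_neq(2)[OF assms(3), where a = 1 and b = 0 and c = 0]
        generic_lattice_neq(2)[OF assms(3), where a = 2 and b = 0 and c = 0]; simp)+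
  ultimately show ?thesis by (simp add: R_op_braid)
qed

lemma T_op_reflection_right:
  assumes "generic (lattice h g0 gn) n z"
  shows "T_op (n - 1) (T_op n (T_op (n - 1) (T_op n G))) z = T_op n (T_op (n - 1) (T_op n (T_op (n - 1) G))) z"
proof -
  define p where "p = n - 2"
  have "T_op (n - 1) = R_op \<kappa> h p" "T_op n = K_op \<nu>n gn (Suc p)"
    using two_le_n by (simp_all add: T_op_R T_op_n p_def Suc_diff_Suc numeral_2_eq_2)
  moreover have "Suc p < n" using two_le_n by (simp add: p_def)
  then have "2 * z (Suc p) + gn \<noteq> 0" "z p - z (Suc p) + h \<noteq> 0"
    "2 * z p + gn + 2 * h \<noteq> 0" "z p + z (Suc p) + gn + h \<noteq> 0"
    by (intro generic_lattice_neq[OF assms, where p = "Suc p" and q = "Suc p" and a = 0 and b = 0 and c = 1]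
        generic_lattice_neq[OF assms, where p = p and q = "Suc p" and a = 1 and b = 0 and c = 0]
        generic_lattice_neq[OF assms, where p = p and q = p and a = 2 and b = 0 and c = 1]
        generic_lattice_neq[OF assms, where p = p and q = "Suc p" and a = 1 and b = 0 and c = 1]; simp)+
  ultimately show ?thesis by (simp add: R_K_op_braid4)
qed

lemma T_op_commute:
  assumes "j + 2 \<le> k" "k \<le> n"
  shows "T_op j (T_op k G) z = T_op k (T_op j G) z"
proof -
  consider "j = 0" "k = n" | "j = 0" "k < n" | "0 < j" "k = n" | "0 < j" "k < n"
    using assms by linarith
  then show ?thesis
  proof cases
    case 1
    then show ?thesis using two_le_n by (simp add: T_op_0 T_op_n K_op_commute)
  next
    case 2
    then show ?thesis using assms by (simp add: T_op_0 T_op_R K_R_op_commute)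
  next
    case 3
    then show ?thesis using assms by (simp add: T_op_n T_op_R K_R_op_commute)
  next
    case 4
    then have "Suc (j - 1) < k - 1" using assms by simp
    moreover have "T_op j = R_op \<kappa> h (j - 1)" "T_op k = R_op \<kappa> h (k - 1)"
      using 4 assms by (simp_all add: T_op_R)
    ultimately show ?thesis by (simp only:) (rule R_op_commute)
  qed
qed

abbreviation T_mat :: "nat \<Rightarrow> op" where
  "T_mat \<equiv> hatT n \<kappa> h \<nu>0 g0 \<nu>n gn"

lemma vec_poly_column_T:
  assumes "j \<le> n" "c \<in> mindex N n" "generic (lattice h g0 gn) n z"
  shows "vec_poly N n (\<lambda>r. T_mat j r c) z = T_op j (basis_poly n c) z"
  using vec_poly_mat_vec_hatT[OF assms(1,3), of "\<lambda>r. opid r c"]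
  by (simp add: mat_vec_column_opid[OF assms(2)] vec_poly_column_opid[OF assms(2)])

lemma vec_poly_column_opmul_T:
  assumes "j \<le> n" "generic (lattice h g0 gn) n z"
    and "\<And>w. generic (lattice h g0 gn) n w \<Longrightarrow> vec_poly N n (\<lambda>r. X r c) w = F w"
  shows "vec_poly N n (\<lambda>r. opmul N n (T_mat j) X r c) z = T_op j F z"
  unfolding column_opmul vec_poly_mat_vec_hatT[OF assms(1,2)] by (rule T_op_cong[OF assms])

lemma hecke_quadratic:
  assumes "j \<le> n"
  shows "opeq N n (opmul N n (T_mat j) (T_mat j)) opid"
  using T_op_involutive[OF assms]
  by (intro opeq_if_vec_poly_eq[OF countable_lattice[of h g0 gn]])
    (simp add: assms vec_poly_column_opmul_T vec_poly_column_T vec_poly_column_opid)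

lemma hecke_reflection_left:
  "opeq N n (opmul N n (T_mat 0) (opmul N n (T_mat 1) (opmul N n (T_mat 0) (T_mat 1))))
            (opmul N n (T_mat 1) (opmul N n (T_mat 0) (opmul N n (T_mat 1) (T_mat 0))))"
  using T_op_reflection_left two_le_n
  by (intro opeq_if_vec_poly_eq[OF countable_lattice[of h g0 gn]]) (simp add: vec_poly_column_opmul_T vec_poly_column_T)

lemma hecke_braid:
  assumes "0 < j" "j + 1 < n"
  shows "opeq N n (opmul N n (T_mat j) (opmul N n (T_mat (j + 1)) (T_mat j)))
                  (opmul N n (T_mat (j + 1)) (opmul N n (T_mat j) (T_mat (j + 1))))"
proof -
  have "j \<le> n" "j + 1 \<le> n" using assms by simp_all
  with T_op_braid[OF assms] show ?thesis
    by (intro opeq_if_vec_poly_eq[OF countable_lattice[of h g0 gn]]) (simp add: vec_poly_column_opmul_T vec_poly_column_T)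
qed

lemma hecke_reflection_right:
  "opeq N n (opmul N n (T_mat (n - 1)) (opmul N n (T_mat n) (opmul N n (T_mat (n - 1)) (T_mat n))))
            (opmul N n (T_mat n) (opmul N n (T_mat (n - 1)) (opmul N n (T_mat n) (T_mat (n - 1)))))"
  using T_op_reflection_right
  by (intro opeq_if_vec_poly_eq[OF countable_lattice[of h g0 gn]]) (simp add: vec_poly_column_opmul_T vec_poly_column_T)

lemma hecke_commute:
  assumes "j + 2 \<le> k" "k \<le> n"
  shows "opeq N n (opmul N n (T_mat j) (T_mat k)) (opmul N n (T_mat k) (T_mat j))"
proof -
  have "j \<le> n" using assms by simp
  moreover have "T_op j (T_op k (basis_poly n c)) z = T_op k (T_op j (basis_poly n c)) z" for c z
    by (rule T_op_commute[OF assms])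
  ultimately show ?thesis using assms
    by (intro opeq_if_vec_poly_eq[OF countable_lattice[of h g0 gn]]) (simp add: vec_poly_column_opmul_T vec_poly_column_T)
qed

end

theorem theorem2:
  fixes N n :: nat and \<kappa> h \<nu>0 g0 \<nu>n gn :: complex
  assumes "N \<ge> 1" and "n \<ge> 2" and "h \<noteq> 0" and "g0 \<noteq> 0" and "gn \<noteq> 0"
  defines "T \<equiv> hatT n \<kappa> h \<nu>0 g0 \<nu>n gn"
  defines "M \<equiv> opmul N n"
  shows "(\<forall>j\<le>n. opeq N n (M (T j) (T j)) opid)
       \<and> opeq N n (M (T 0) (M (T 1) (M (T 0) (T 1)))) (M (T 1) (M (T 0) (M (T 1) (T 0))))
       \<and> (\<forall>j. 1 \<le> j \<and> j \<le> n - 2 \<longrightarrow>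
             opeq N n (M (T j) (M (T (j+1)) (T j))) (M (T (j+1)) (M (T j) (T (j+1)))))
       \<and> opeq N n (M (T (n-1)) (M (T n) (M (T (n-1)) (T n))))
                  (M (T n) (M (T (n-1)) (M (T n) (T (n-1)))))
       \<and> (\<forall>j\<le>n. \<forall>k\<le>n. j + 2 \<le> k \<longrightarrow> opeq N n (M (T j) (T k)) (M (T k) (T j)))"
  unfolding T_def M_def
  using hecke_quadratic[OF assms(2,3)] hecke_reflection_left[OF assms(2,3)]
    hecke_braid[OF assms(2,3)] hecke_reflection_right[OF assms(2,3)] hecke_commute[OF assms(2,3)]
  by auto

end
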